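(* In $E^{\infty}_8$ let $b_k$ be the number of elements of length $k$ and, for $k\ge1$ and $1\le i\le8$, let $b_{k;i}$ be the number of elements of length $k$ whose smallest representative word in length-lexicographic order (with $x_1<\cdots<x_8$) begins with $x_i$. Then $b_0=1$, $b_{1;i}=1$, $b_k=\sum_{i=1}^8b_{k;i}$ for $k\ge1$, and for $k\ge2$: $$b_{k;j}=\sum_{i=\max(1,j-1)}^{8}b_{k-1;i}\quad(j\ne5),\qquad b_{k;5}=b_{k-1;3}+\sum_{i=5}^8b_{k-1;i}.$$
   Context: $E^{\infty}_8=\langle x_1,\dots,x_8\mid x_ix_j=x_jx_i \text{ whenever } \{x_i,x_j\}\text{ is not an edge}\rangle$, where the edges are $x_1x_2$, $x_2x_3$, $x_3x_4$, $x_3x_5$, $x_5x_6$, $x_6x_7$, $x_7x_8$. *)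

theory Defs
  imports Main
begin

text \<open>Generators x_1..x_8 are represented by the naturals 1..8.
  Edges of the E_8 diagram; non-adjacent generators commute.\<close>

definition E8_adj :: "nat \<Rightarrow> nat \<Rightarrow> bool" where
  "E8_adj a b \<longleftrightarrow> {a, b} \<in> {{1,2},{2,3},{3,4},{3,5},{5,6},{6,7},{7,8}}"

definition E8_words :: "nat list set" where
  "E8_words = {w. set w \<subseteq> {1..8}}"

definition E8_step :: "nat list \<Rightarrow> nat list \<Rightarrow> bool" where
  "E8_step u v \<longleftrightarrow> (\<exists>xs ys a b. u = xs @ [a, b] @ ys \<and> v = xs @ [b, a] @ ys \<and> \<not> E8_adj a b)"

text \<open>Equivalence class of a word: the element of the monoid it represents.\<close>
definition E8_class :: "nat list \<Rightarrow> nat list set" where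
  "E8_class w = {v. (sup E8_step (E8_step\<inverse>\<inverse>))\<^sup>*\<^sup>* w v}"

definition E8_elems :: "nat \<Rightarrow> nat list set set" where
  "E8_elems k = {E8_class w | w. w \<in> E8_words \<and> length w = k}"

definition E8_b :: "nat \<Rightarrow> nat" where
  "E8_b k = card (E8_elems k)"

definition llex_less :: "nat list \<Rightarrow> nat list \<Rightarrow> bool" where
  "llex_less u v \<longleftrightarrow> length u < length v \<or>
     (length u = length v \<and> (u, v) \<in> lexord {(a, b). a < b})"

definition smallest_rep :: "nat list set \<Rightarrow> nat list \<Rightarrow> bool" where
  "smallest_rep C w \<longleftrightarrow> w \<in> C \<and> (\<forall>v\<in>C. v \<noteq> w \<longrightarrow> llex_less w v)"

definition E8_bi :: "nat \<Rightarrow> nat \<Rightarrow> nat" where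
  "E8_bi k i = card {C \<in> E8_elems k. \<exists>w. smallest_rep C w \<and> w \<noteq> [] \<and> hd w = i}"

end

theory Submission
  imports Defs "HOL-Library.List_Lexorder"
begin

text \<open>Every element of the monoid has a unique lexicographically least representative word,
  so b_k and b_{k;i} count such normal forms. Let i v be normal and suppose j i v is not.
  By Levi's lemma some letter a < j commuting with j can be moved to the front of i v; then
  i \<le> a, and if i < a the letters i and a commute. With the given numbering commutation is
  interval-closed (the only edge between non-consecutive generators is x_3 x_5, and x_4 is adjacent
  to x_3), so in either case i < j and i commutes with j. Hence j i v is normal iff i v is normal
  and i may follow j, i.e. not (i < j and x_i commutes with x_j); this leaves the letters
  i \<ge> j - 1, together with i = 3 when j = 5.\<close>

definition swap_step :: "('a \<Rightarrow> 'a \<Rightarrow> bool) \<Rightarrow> 'a list \<Rightarrow> 'a list \<Rightarrow> bool" where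
  "swap_step I u v \<longleftrightarrow> (\<exists>xs ys a b. u = xs @ [a, b] @ ys \<and> v = xs @ [b, a] @ ys \<and> I a b)"

abbreviation trace_eq :: "('a \<Rightarrow> 'a \<Rightarrow> bool) \<Rightarrow> 'a list \<Rightarrow> 'a list \<Rightarrow> bool" where
  "trace_eq I \<equiv> (swap_step I)\<^sup>*\<^sup>*"

lemma swap_step_Cons: "swap_step I u v \<Longrightarrow> swap_step I (x # u) (x # v)"
  unfolding swap_step_def by (metis append_Cons)

lemma trace_eq_Cons: "trace_eq I u v \<Longrightarrow> trace_eq I (x # u) (x # v)"
  by (induction rule: rtranclp_induct) (auto intro: rtranclp.rtrancl_into_rtrancl swap_step_Cons)

lemma swap_step_length: "swap_step I u v \<Longrightarrow> length u = length v"
  unfolding swap_step_def by auto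

lemma trace_eq_length: "trace_eq I u v \<Longrightarrow> length u = length v"
  by (induction rule: rtranclp_induct) (auto dest: swap_step_length)

lemma swap_step_set: "swap_step I u v \<Longrightarrow> set u = set v"
  unfolding swap_step_def by auto

lemma trace_eq_set: "trace_eq I u v \<Longrightarrow> set u = set v"
  by (induction rule: rtranclp_induct) (auto dest: swap_step_set)

lemma trace_eq_swap: "I a b \<Longrightarrow> trace_eq I (a # b # u) (b # a # u)"
  unfolding swap_step_def by (rule r_into_rtranclp) (metis append.left_neutral append_Cons)

lemma swap_step_Cons_cases:
  assumes "swap_step I (b # v) z"
  obtains v' where "swap_step I v v'" "z = b # v'"
    | c v2 where "v = c # v2" "z = c # b # v2" "I b c"
proof -
  obtain xs ys a c where split: "b # v = xs @ [a, c] @ ys" "z = xs @ [c, a] @ ys" "I a c"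
    using assms unfolding swap_step_def by blast
  show thesis
  proof (cases xs)
    case Nil
    then show thesis using split that(2) by auto
  next
    case (Cons x xs')
    then have "swap_step I v (xs' @ [c, a] @ ys)" "z = b # xs' @ [c, a] @ ys"
      using split unfolding swap_step_def by auto
    then show thesis using that(1) by blast
  qed
qed

locale partial_commutation =
  fixes I :: "'a \<Rightarrow> 'a \<Rightarrow> bool"
  assumes independent_sym: "I a b \<Longrightarrow> I b a"
begin

lemma swap_step_sym: "swap_step I u v \<Longrightarrow> swap_step I v u"
  unfolding swap_step_def using independent_sym by blast

lemma trace_eq_sym: "trace_eq I u v \<Longrightarrow> trace_eq I v u"
  by (induction rule: rtranclp_induct)
     (auto intro: converse_rtranclp_into_rtranclp swap_step_sym)

lemma sup_swap_step_conversep: "sup (swap_step I) (swap_step I)\<inverse>\<inverse> = swap_step I"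
  by (auto intro!: ext intro: swap_step_sym)

text \<open>The conclusion of Levi's lemma for traces, for one first letter on each side.\<close>

definition levi_split :: "'a \<Rightarrow> 'a list \<Rightarrow> 'a \<Rightarrow> 'a list \<Rightarrow> bool" where
  "levi_split a u b v \<longleftrightarrow> (a = b \<and> trace_eq I u v) \<or>
     (a \<noteq> b \<and> I a b \<and> (\<exists>w. trace_eq I u (b # w) \<and> trace_eq I v (a # w)))"

text \<open>The hypothesis \<open>shorter\<close> is Levi's lemma for the strictly shorter word \<open>v2\<close>; it is
  needed when the swap brings a new letter \<open>c\<close> to the front.\<close>

lemma levi_split_swap_step:
  assumes split: "levi_split a u b v" and step: "swap_step I (b # v) z"
    and shorter: "\<And>c v2 w. v = c # v2 \<Longrightarrow> trace_eq I v (a # w) \<Longrightarrow> levi_split c v2 a w"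
  obtains c v' where "z = c # v'" "levi_split a u c v'"
  using step
proof (cases rule: swap_step_Cons_cases)
  case (1 v')
  then have "trace_eq I v v'" "trace_eq I v' v" by (auto intro: swap_step_sym)
  then show thesis using split that[OF \<open>z = b # v'\<close>]
    unfolding levi_split_def by (blast intro: rtranclp_trans)
next
  case (2 c v2)
  have "levi_split a u c (b # v2)"
    using split[unfolded levi_split_def]
  proof (elim disjE conjE exE)
    assume "a = b" "trace_eq I u v"
    then show ?thesis using 2 independent_sym unfolding levi_split_def by auto
  next
    fix w assume ab: "a \<noteq> b" "I a b" and uw: "trace_eq I u (b # w)" and vw: "trace_eq I v (a # w)"
    show ?thesis
    proof (cases "c = a")
      case True
      then have "trace_eq I v2 w" using shorter[OF \<open>v = c # v2\<close> vw] unfolding levi_split_def by auto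
      then have "trace_eq I u (b # v2)" using uw by (meson trace_eq_Cons trace_eq_sym rtranclp_trans)
      then show ?thesis using True unfolding levi_split_def by auto
    next
      case False
      then obtain w' where w': "I c a" "trace_eq I v2 (a # w')" "trace_eq I w (c # w')"
        using shorter[OF \<open>v = c # v2\<close> vw] unfolding levi_split_def by auto
      have "trace_eq I u (c # b # w')"
        using uw trace_eq_Cons[OF w'(3), of b] trace_eq_swap[of I b c w', OF \<open>I b c\<close>]
        by (blast intro: rtranclp_trans)
      moreover have "trace_eq I (b # v2) (a # b # w')"
        using trace_eq_Cons[OF w'(2), of b] trace_eq_swap[of I b a w'] ab independent_sym
        by (blast intro: rtranclp_trans)
      ultimately show ?thesis using False w'(1) independent_sym unfolding levi_split_def by auto
    qed
  qed
  then show thesis using that \<open>z = c # b # v2\<close> by blast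
qed

lemma trace_eq_Cons_Cons: "trace_eq I (a # u) (b # v) \<Longrightarrow> levi_split a u b v"
proof (induction "length u" arbitrary: a u b v rule: less_induct)
  case less
  have "trace_eq I (a # u) y \<Longrightarrow> \<exists>b v. y = b # v \<and> levi_split a u b v" for y
  proof (induction rule: rtranclp_induct)
    case base
    then show ?case by (auto simp: levi_split_def)
  next
    case (step y z)
    then obtain b v where y: "y = b # v" and split: "levi_split a u b v" by blast
    have "length v = length u" using trace_eq_length[OF step(1)] y by simp
    then have "levi_split c v2 a w" if "v = c # v2" "trace_eq I v (a # w)" for c v2 w
      using less(1) that by simp
    with levi_split_swap_step[OF split step(2)[unfolded y]] show ?case by metis
  qed
  then show ?case using less(2) by blast
qed

end

definition lex_normal :: "('a::linorder \<Rightarrow> 'a \<Rightarrow> bool) \<Rightarrow> 'a list \<Rightarrow> bool" where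
  "lex_normal I w \<longleftrightarrow> (\<forall>v. trace_eq I w v \<longrightarrow> w \<le> v)"

lemma lex_normal_Cons_tl: "lex_normal I (j # v) \<Longrightarrow> lex_normal I v"
  unfolding lex_normal_def using trace_eq_Cons by fastforce

lemma lex_normal_single: "lex_normal I [i]"
  unfolding lex_normal_def
proof (intro allI impI)
  fix v assume "trace_eq I [i] v"
  then have "length v = 1" "set v = {i}" using trace_eq_length trace_eq_set by fastforce+
  then show "[i] \<le> v" by (cases v) auto
qed

lemma trace_class_finite: "finite {v. trace_eq I w v}"
proof (rule finite_subset)
  show "{v. trace_eq I w v} \<subseteq> {v. set v \<subseteq> set w \<and> length v = length w}"
    using trace_eq_length trace_eq_set by fastforce
qed (rule finite_lists_length_eq[OF finite_set])

lemma lex_normal_exists: "\<exists>x. trace_eq I w x \<and> lex_normal I x"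
proof -
  define x where "x = Min {v. trace_eq I w v}"
  have "x \<in> {v. trace_eq I w v}"
    unfolding x_def by (rule Min_in[OF trace_class_finite]) auto
  then have wx: "trace_eq I w x" by simp
  have "lex_normal I x" unfolding lex_normal_def
  proof (intro allI impI)
    fix v assume "trace_eq I x v"
    then have "trace_eq I w v" using wx by (rule rtranclp_trans[rotated])
    then show "x \<le> v" unfolding x_def by (simp add: Min_le[OF trace_class_finite])
  qed
  with wx show ?thesis by blast
qed

locale ordered_partial_commutation = partial_commutation I for I :: "'a::linorder \<Rightarrow> 'a \<Rightarrow> bool"
begin

lemma lex_normal_unique: "lex_normal I x \<Longrightarrow> lex_normal I y \<Longrightarrow> trace_eq I x y \<Longrightarrow> x = y"
  unfolding lex_normal_def by (meson antisym trace_eq_sym)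

definition followers :: "'a \<Rightarrow> 'a set" where
  "followers j = {i. I i j \<longrightarrow> j \<le> i}"

lemma lex_normal_Cons_Cons_followers:
  assumes normal: "lex_normal I (j # i # v)"
  shows "i \<in> followers j"
  unfolding followers_def
proof (intro CollectI impI)
  assume "I i j"
  then have "trace_eq I (j # i # v) (i # j # v)" using independent_sym by (blast intro: trace_eq_swap)
  then have "j # i # v \<le> i # j # v" using normal unfolding lex_normal_def by blast
  then show "j \<le> i" by (auto simp: less_imp_le)
qed

definition normal_words :: "'a set \<Rightarrow> nat \<Rightarrow> 'a list set" where
  "normal_words S k = {w. set w \<subseteq> S \<and> length w = k \<and> lex_normal I w}"

definition normal_words_hd :: "'a set \<Rightarrow> nat \<Rightarrow> 'a \<Rightarrow> 'a list set" where
  "normal_words_hd S k i = {w \<in> normal_words S k. w \<noteq> [] \<and> hd w = i}"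

lemma finite_normal_words: "finite S \<Longrightarrow> finite (normal_words S k)"
  unfolding normal_words_def by (rule finite_subset[OF _ finite_lists_length_eq[of S k]]) auto

lemma card_normal_words_hd_in:
  assumes "finite S" "k \<ge> 1"
  shows "card {w \<in> normal_words S k. hd w \<in> B} = (\<Sum>i\<in>B \<inter> S. card (normal_words_hd S k i))"
proof -
  have "{w \<in> normal_words S k. hd w \<in> B} = (\<Union>i\<in>B \<inter> S. normal_words_hd S k i)"
  proof (intro equalityI subsetI)
    fix w assume w: "w \<in> {w \<in> normal_words S k. hd w \<in> B}"
    then have "w \<noteq> []" "set w \<subseteq> S" using assms(2) unfolding normal_words_def by auto
    then show "w \<in> (\<Union>i\<in>B \<inter> S. normal_words_hd S k i)"
      using w hd_in_set unfolding normal_words_hd_def by blast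
  qed (auto simp: normal_words_hd_def)
  moreover have "card (\<Union>i\<in>B \<inter> S. normal_words_hd S k i) = (\<Sum>i\<in>B \<inter> S. card (normal_words_hd S k i))"
    using assms(1) by (intro card_UN_disjoint)
      (auto simp: normal_words_hd_def intro: finite_subset[OF _ finite_normal_words])
  ultimately show ?thesis by simp
qed

end

locale interval_closed_commutation = ordered_partial_commutation +
  assumes independent_interval_closed: "i < a \<Longrightarrow> a < j \<Longrightarrow> I i a \<Longrightarrow> I a j \<Longrightarrow> I i j"
begin

lemma lex_normal_Cons_Cons:
  "lex_normal I (j # i # v) \<longleftrightarrow> lex_normal I (i # v) \<and> i \<in> followers j"
proof (intro iffI conjI)
  assume "lex_normal I (j # i # v)"
  then show "lex_normal I (i # v)" "i \<in> followers j"
    by (auto intro: lex_normal_Cons_tl lex_normal_Cons_Cons_followers)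
next
  assume "lex_normal I (i # v) \<and> i \<in> followers j"
  then have normal: "lex_normal I (i # v)" "I i j \<longrightarrow> j \<le> i" unfolding followers_def by auto
  show "lex_normal I (j # i # v)" unfolding lex_normal_def
  proof (intro allI impI)
    fix u assume ju: "trace_eq I (j # i # v) u"
    obtain a u' where u: "u = a # u'" using trace_eq_length[OF ju] by (cases u) auto
    have split: "levi_split j (i # v) a u'" using trace_eq_Cons_Cons ju u by simp
    show "j # i # v \<le> u"
    proof (cases "a = j")
      case True
      then have "trace_eq I (i # v) u'" using split unfolding levi_split_def by auto
      then show ?thesis using normal u True unfolding lex_normal_def by auto
    next
      case False
      then obtain w where ja: "I j a" and iw: "trace_eq I (i # v) (a # w)"
        using split unfolding levi_split_def by auto
      have "i # v \<le> a # w" using normal iw unfolding lex_normal_def by blast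
      then consider "i = a" | "i < a" by fastforce
      then have "j < a"
      proof cases
        case 1
        then show ?thesis using normal ja False independent_sym by force
      next
        case 2
        then have "I i a" using trace_eq_Cons_Cons[OF iw] unfolding levi_split_def by auto
        then show ?thesis
          using 2 independent_interval_closed[of i a j] ja normal False independent_sym by force
      qed
      then show ?thesis using u by simp
    qed
  qed
qed

lemma normal_words_hd_Suc_Suc:
  assumes "j \<in> S"
  shows "normal_words_hd S (Suc (Suc n)) j =
    Cons j ` {v \<in> normal_words S (Suc n). hd v \<in> followers j}"
proof (intro equalityI subsetI)
  fix w assume "w \<in> normal_words_hd S (Suc (Suc n)) j"
  then obtain i v where "w = j # i # v" "set (i # v) \<subseteq> S" "length v = n" "lex_normal I (j # i # v)"
    unfolding normal_words_hd_def normal_words_def by (auto simp: length_Suc_conv)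
  then show "w \<in> Cons j ` {v \<in> normal_words S (Suc n). hd v \<in> followers j}"
    using lex_normal_Cons_Cons unfolding normal_words_def by auto
next
  fix w assume "w \<in> Cons j ` {v \<in> normal_words S (Suc n). hd v \<in> followers j}"
  then obtain i v where "w = j # i # v" "set (i # v) \<subseteq> S" "length v = n" "lex_normal I (i # v)"
    "i \<in> followers j"
    unfolding normal_words_def by (auto simp: length_Suc_conv)
  then show "w \<in> normal_words_hd S (Suc (Suc n)) j"
    using lex_normal_Cons_Cons \<open>j \<in> S\<close> unfolding normal_words_hd_def normal_words_def by auto
qed

lemma card_normal_words_hd_Suc_Suc:
  assumes "finite S" "j \<in> S"
  shows "card (normal_words_hd S (Suc (Suc n)) j) =
    (\<Sum>i\<in>followers j \<inter> S. card (normal_words_hd S (Suc n) i))"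
proof -
  have "card (normal_words_hd S (Suc (Suc n)) j) =
      card (Cons j ` {v \<in> normal_words S (Suc n). hd v \<in> followers j})"
    using normal_words_hd_Suc_Suc[OF \<open>j \<in> S\<close>] by simp
  also have "\<dots> = card {v \<in> normal_words S (Suc n). hd v \<in> followers j}"
    by (rule card_image) simp
  also have "\<dots> = (\<Sum>i\<in>followers j \<inter> S. card (normal_words_hd S (Suc n) i))"
    by (rule card_normal_words_hd_in[OF \<open>finite S\<close>]) simp
  finally show ?thesis .
qed

end

abbreviation E8_commute :: "nat \<Rightarrow> nat \<Rightarrow> bool" where
  "E8_commute a b \<equiv> \<not> E8_adj a b"

lemma E8_adj_iff: "E8_adj i j \<longleftrightarrow>
    i = 1 \<and> j = 2 \<or> i = 2 \<and> j = 1 \<or> i = 2 \<and> j = 3 \<or> i = 3 \<and> j = 2 \<or> i = 3 \<and> j = 4 \<or>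
    i = 4 \<and> j = 3 \<or> i = 3 \<and> j = 5 \<or> i = 5 \<and> j = 3 \<or> i = 5 \<and> j = 6 \<or> i = 6 \<and> j = 5 \<or>
    i = 6 \<and> j = 7 \<or> i = 7 \<and> j = 6 \<or> i = 7 \<and> j = 8 \<or> i = 8 \<and> j = 7"
  unfolding E8_adj_def by (simp only: insert_iff empty_iff doubleton_eq_iff) argo

lemma E8_commute_interval_closed:
  assumes "i < a" "a < j" "E8_commute i a" "E8_commute a j"
  shows "E8_commute i j"
proof
  assume "E8_adj i j"
  then have "i = 3 \<and> j = 5" using assms(1,2) unfolding E8_adj_iff by linarith
  then show False using assms unfolding E8_adj_iff by simp
qed

interpretation E8: interval_closed_commutation E8_commute
proof unfold_locales
  show "E8_commute b a" if "E8_commute a b" for a b :: nat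
    using that by (simp add: E8_adj_def insert_commute)
qed (rule E8_commute_interval_closed)

lemma E8_step_eq: "E8_step = swap_step E8_commute"
  by (simp add: fun_eq_iff E8_step_def swap_step_def)

lemma E8_class_eq: "E8_class w = {v. trace_eq E8_commute w v}"
  unfolding E8_class_def E8_step_eq E8.sup_swap_step_conversep ..

lemma E8_followers_iff: "i \<in> E8.followers j \<longleftrightarrow> E8_adj i j \<or> j \<le> i"
  unfolding E8.followers_def by auto

lemma E8_followers:
  assumes "j \<in> {1..8}" "j \<noteq> 5"
  shows "E8.followers j \<inter> {1..8} = {max 1 (j - 1)..8}"
proof -
  have "j = 1 \<or> j = 2 \<or> j = 3 \<or> j = 4 \<or> j = 6 \<or> j = 7 \<or> j = 8" using assms by auto
  then show ?thesis
    unfolding set_eq_iff Int_iff E8_followers_iff by (elim disjE) (auto simp: E8_adj_iff)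
qed

lemma E8_followers_5: "E8.followers 5 \<inter> {1..8} = insert 3 {5..8}"
  unfolding set_eq_iff Int_iff E8_followers_iff by (auto simp: E8_adj_iff)

lemma smallest_rep_E8_class_iff: "smallest_rep (E8_class w) w \<longleftrightarrow> lex_normal E8_commute w"
  unfolding smallest_rep_def lex_normal_def E8_class_eq llex_less_def
  by (auto simp: trace_eq_length order_le_less list_less_def)

lemma E8_class_eq_if_trace_eq: "trace_eq E8_commute w x \<Longrightarrow> E8_class w = E8_class x"
  unfolding E8_class_eq by (auto intro: rtranclp_trans E8.trace_eq_sym)

lemma inj_on_E8_class: "inj_on E8_class (E8.normal_words S k)"
proof (rule inj_onI)
  fix x y assume "x \<in> E8.normal_words S k" "y \<in> E8.normal_words S k" "E8_class x = E8_class y"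
  then show "x = y"
    using E8.lex_normal_unique unfolding E8_class_eq E8.normal_words_def by blast
qed

lemma E8_elems_eq: "E8_elems k = E8_class ` E8.normal_words {1..8} k"
proof (intro equalityI subsetI)
  fix C assume "C \<in> E8_elems k"
  then obtain w where w: "C = E8_class w" "set w \<subseteq> {1..8}" "length w = k"
    unfolding E8_elems_def E8_words_def by auto
  obtain x where x: "trace_eq E8_commute w x" "lex_normal E8_commute x"
    using lex_normal_exists by blast
  have "x \<in> E8.normal_words {1..8} k"
    using x w trace_eq_length[OF x(1)] trace_eq_set[OF x(1)] unfolding E8.normal_words_def by auto
  then show "C \<in> E8_class ` E8.normal_words {1..8} k"
    using E8_class_eq_if_trace_eq[OF x(1)] w by auto
qed (auto simp: E8_elems_def E8_words_def E8.normal_words_def)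

lemma E8_b_eq_card: "E8_b k = card (E8.normal_words {1..8} k)"
  unfolding E8_b_def E8_elems_eq by (rule card_image[OF inj_on_E8_class])

lemma smallest_rep_E8_class_normal:
  assumes "lex_normal E8_commute x"
  shows "smallest_rep (E8_class x) w \<longleftrightarrow> w = x"
proof
  assume "smallest_rep (E8_class x) w"
  then have "trace_eq E8_commute x w" unfolding smallest_rep_def E8_class_eq by simp
  moreover from this have "lex_normal E8_commute w"
    using \<open>smallest_rep (E8_class x) w\<close> E8_class_eq_if_trace_eq smallest_rep_E8_class_iff by metis
  ultimately show "w = x" using assms E8.lex_normal_unique by metis
qed (use assms smallest_rep_E8_class_iff in simp)

lemma E8_bi_eq_card: "E8_bi k i = card (E8.normal_words_hd {1..8} k i)"
proof -
  have "{C \<in> E8_elems k. \<exists>w. smallest_rep C w \<and> w \<noteq> [] \<and> hd w = i} =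
      E8_class ` E8.normal_words_hd {1..8} k i"
    unfolding E8_elems_eq E8.normal_words_hd_def
    by (auto simp: smallest_rep_E8_class_normal E8.normal_words_def)
  moreover have "inj_on E8_class (E8.normal_words_hd {1..8} k i)"
    by (rule inj_on_subset[OF inj_on_E8_class]) (auto simp: E8.normal_words_hd_def)
  ultimately show ?thesis unfolding E8_bi_def by (simp add: card_image)
qed

lemma E8_bi_Suc_Suc:
  "j \<in> {1..8} \<Longrightarrow> E8_bi (Suc (Suc n)) j = (\<Sum>i\<in>E8.followers j \<inter> {1..8}. E8_bi (Suc n) i)"
  unfolding E8_bi_eq_card by (rule E8.card_normal_words_hd_Suc_Suc) simp_all

theorem lemma9:
  shows "E8_b 0 = 1 \<and>
    (\<forall>i\<in>{1..8}. E8_bi 1 i = 1) \<and>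
    (\<forall>k\<ge>1. E8_b k = (\<Sum>i=1..8. E8_bi k i)) \<and>
    (\<forall>k\<ge>2. \<forall>j\<in>{1..8}. j \<noteq> 5 \<longrightarrow>
           E8_bi k j = (\<Sum>i=max 1 (j - 1)..8. E8_bi (k - 1) i)) \<and>
    (\<forall>k\<ge>2. E8_bi k 5 = E8_bi (k - 1) 3 + (\<Sum>i=5..8. E8_bi (k - 1) i))"
proof (intro conjI allI ballI impI)
  have "E8.normal_words {1..8} 0 = {[]}"
    unfolding E8.normal_words_def lex_normal_def by auto
  then show "E8_b 0 = 1" by (simp add: E8_b_eq_card)
next
  fix i :: nat assume "i \<in> {1..8}"
  then have "E8.normal_words_hd {1..8} 1 i = {[i]}"
    using lex_normal_single unfolding E8.normal_words_hd_def E8.normal_words_def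
    by (auto simp: length_Suc_conv)
  then show "E8_bi 1 i = 1" by (simp add: E8_bi_eq_card)
next
  fix k :: nat assume "k \<ge> 1"
  then show "E8_b k = (\<Sum>i=1..8. E8_bi k i)"
    using E8.card_normal_words_hd_in[of "{1..8}" k UNIV] by (simp add: E8_b_eq_card E8_bi_eq_card)
next
  fix k j :: nat assume "k \<ge> 2" "j \<in> {1..8}" "j \<noteq> 5"
  then obtain n where "k = Suc (Suc n)" by (metis add_2_eq_Suc le_Suc_ex)
  then show "E8_bi k j = (\<Sum>i=max 1 (j - 1)..8. E8_bi (k - 1) i)"
    using E8_bi_Suc_Suc[OF \<open>j \<in> {1..8}\<close>] E8_followers[OF \<open>j \<in> {1..8}\<close> \<open>j \<noteq> 5\<close>] by simp
next
  fix k :: nat assume "k \<ge> 2"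
  then obtain n where "k = Suc (Suc n)" by (metis add_2_eq_Suc le_Suc_ex)
  then show "E8_bi k 5 = E8_bi (k - 1) 3 + (\<Sum>i=5..8. E8_bi (k - 1) i)"
    using E8_bi_Suc_Suc[of 5 n] unfolding E8_followers_5 by simp
qed

end
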